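(* Let $G_d=(\mathcal{N},\mathcal{E}_d)$ be a directed acyclic graph with agents indexed in topological order, and let $\{\pi^k\}$ be the sequence of deterministic joint policies generated by Action-Dependent Multi-Agent Policy Iteration associated with $G_d$, under the Singleton Argmax Assumption. Let $V^{\circ}=\lim_{k\to\infty}V^{\pi^k}$ and let $G_c=(\mathcal{N},\mathcal{E}_c)$ be a coordination graph of the function $Q^{V^{\circ}}(s,a)=r(s,a)+\gamma\sum_{s'}P(s'|s,a)V^{\circ}(s')$. If $N_d(i)=N_c(i^{[+]})$ for all $i\in\mathcal{N}$, then there exists $K$ with $\pi^k=\pi^K$ for all $k\ge K$, and $\pi^K$ is globally optimal ($V^{\pi^K}=V^*$).
   Context: Markov game $\langle \mathcal{N},\mathcal{S},\mathcal{A},P,r,\gamma\rangle$: agents $\mathcal{N}=\{1,\dots,n\}$, finite state space $\mathcal{S}$, finite action spaces $\mathcal{A}_i$, $\mathcal{A}=\prod_i\mathcal{A}_i$, transition kernel $P$, reward $r$, discount $\gamma\in[0,1)$; $V^\pi$, $Q^\pi$ are the usual discounted value functions and $V^*$ the optimal value function. (The limit $V^\circ$ exists: the sequence $V^{\pi^k}$ is eventually constant.) Notation: $a_S=(a_j)_{j\in S}$, $\mathcal{A}_S=\prod_{j\in S}\mathcal{A}_j$, $-S=\mathcal{N}\setminus S$, $i^{[+]}=\{i,\dots,n\}$. Coordination graph: undirected $G_c=(\mathcal{N},\mathcal{E}_c)$ is a CG of $Q:\mathcal{S}\times\mathcal{A}\to\mathbb{R}$ if $Q(s,a)=\sum_iQ_i(s,a_i)+\sum_{(i,j)\in\mathcal{E}_c}Q_{ij}(s,a_i,a_j)$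 for some functions $Q_i,Q_{ij}$. $N_c(S)=(\bigcup_{i\in S}N_c(i))\setminus S$ where $N_c(i)$ are the neighbors of $i$. ADG: directed acyclic $G_d$, $N_d(i)=\{j:(j,i)\in\mathcal{E}_d\}$, $N_d[i]=N_d(i)\cup\{i\}$, $j<i$ for $j\in N_d(i)$. A deterministic policy associated with $G_d$ consists of maps $\pi_i:\mathcal{S}\times\mathcal{A}_{N_d(i)}\to\mathcal{A}_i$, executed in index order. For fixed $a_{N_d[i]}$, $\pi_{-N_d[i]}(s,a_{N_d[i]})$ denotes the actions of agents outside $N_d[i]$ obtained by executing their policies in index order with $a_{N_d[i]}$ held fixed. Action-Dependent Multi-Agent Policy Iteration: initialize deterministic $\pi^0$ associated with $G_d$; for $k=0,1,\dots$ compute $Q^{\pi^k}$, then for $i=1,\dots,n$, with $\pi^{k,i}=(\pi^{k+1}_1,\dots,\pi^{k+1}_{i-1},\pi^k_i,\dots,\pi^k_n)$, set for all $s,a_{N_d(i)}$: $\pi^{k+1}_i(s,a_{N_d(i)})\in\arg\max_{a_i}Q^{\pi^k}(s,a_{N_d[i]},\pi^{k,i}_{-N_d[i]}(s,a_{N_d[i]}))$. Singleton Argmax Assumption: each such argmax set is a singleton for all $k\ge1$, $i$, $s$, $a_{N_d(i)}$. *)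

theory Defs
  imports "HOL-Analysis.Analysis"
begin

text \<open>Agents are 0,...,n-1 (index order = topological order of the ADG).
 Per-agent action sets A i :: 'a set; joint actions are extensional functions
 in PiE {..<n} A. States form a finite type 's.\<close>

definition jactions :: "nat \<Rightarrow> (nat \<Rightarrow> 'a set) \<Rightarrow> (nat \<Rightarrow> 'a) set" where
  "jactions n A = PiE {..<n} A"

fun stepdist :: "('s::finite \<Rightarrow> (nat \<Rightarrow> 'a) \<Rightarrow> 's \<Rightarrow> real) \<Rightarrow> ('s \<Rightarrow> (nat \<Rightarrow> 'a))
                 \<Rightarrow> nat \<Rightarrow> 's \<Rightarrow> 's \<Rightarrow> real" where
  "stepdist P mu 0 s s' = (if s' = s then 1 else 0)"
| "stepdist P mu (Suc t) s s' = (\<Sum>u\<in>UNIV. stepdist P mu t s u * P u (mu u) s')"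

definition Vpi :: "('s::finite \<Rightarrow> (nat \<Rightarrow> 'a) \<Rightarrow> 's \<Rightarrow> real) \<Rightarrow> ('s \<Rightarrow> (nat \<Rightarrow> 'a) \<Rightarrow> real)
                   \<Rightarrow> real \<Rightarrow> ('s \<Rightarrow> (nat \<Rightarrow> 'a)) \<Rightarrow> 's \<Rightarrow> real" where
  "Vpi P r \<gamma> mu s = (\<Sum>t. \<gamma> ^ t * (\<Sum>u\<in>UNIV. stepdist P mu t s u * r u (mu u)))"

definition QV :: "('s::finite \<Rightarrow> (nat \<Rightarrow> 'a) \<Rightarrow> 's \<Rightarrow> real) \<Rightarrow> ('s \<Rightarrow> (nat \<Rightarrow> 'a) \<Rightarrow> real)
                  \<Rightarrow> real \<Rightarrow> ('s \<Rightarrow> real) \<Rightarrow> 's \<Rightarrow> (nat \<Rightarrow> 'a) \<Rightarrow> real" where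
  "QV P r \<gamma> V s a = r s a + \<gamma> * (\<Sum>s'\<in>UNIV. P s a s' * V s')"

definition Vstar :: "nat \<Rightarrow> (nat \<Rightarrow> 'a set) \<Rightarrow> ('s::finite \<Rightarrow> (nat \<Rightarrow> 'a) \<Rightarrow> 's \<Rightarrow> real)
                     \<Rightarrow> ('s \<Rightarrow> (nat \<Rightarrow> 'a) \<Rightarrow> real) \<Rightarrow> real \<Rightarrow> 's \<Rightarrow> real" where
  "Vstar n A P r \<gamma> s = (SUP mu\<in>{mu. \<forall>s. mu s \<in> jactions n A}. Vpi P r \<gamma> mu s)"

text \<open>A policy profile p :: nat => 's => (nat => 'a) => 'a, where p i s b with
 b in PiE (Nd i) A is pi_i(s, a_{N_d(i)}).\<close>
fun exec_pre :: "(nat \<Rightarrow> nat set) \<Rightarrow> (nat \<Rightarrow> 's \<Rightarrow> (nat \<Rightarrow> 'a) \<Rightarrow> 'a) \<Rightarrow> nat set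
                 \<Rightarrow> (nat \<Rightarrow> 'a) \<Rightarrow> 's \<Rightarrow> nat \<Rightarrow> (nat \<Rightarrow> 'a)" where
  "exec_pre Nd p F a s 0 = (\<lambda>_. undefined)"
| "exec_pre Nd p F a s (Suc i) =
     (let c = exec_pre Nd p F a s i
      in c(i := (if i \<in> F then a i else p i s (restrict c (Nd i)))))"

definition exec :: "(nat \<Rightarrow> nat set) \<Rightarrow> nat \<Rightarrow> (nat \<Rightarrow> 's \<Rightarrow> (nat \<Rightarrow> 'a) \<Rightarrow> 'a) \<Rightarrow> nat set
                 \<Rightarrow> (nat \<Rightarrow> 'a) \<Rightarrow> 's \<Rightarrow> (nat \<Rightarrow> 'a)" where
  "exec Nd n p F a s = exec_pre Nd p F a s n"

definition jpol :: "(nat \<Rightarrow> nat set) \<Rightarrow> nat \<Rightarrow> (nat \<Rightarrow> 's \<Rightarrow> (nat \<Rightarrow> 'a) \<Rightarrow> 'a) \<Rightarrow> 's \<Rightarrow> (nat \<Rightarrow> 'a)" where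
  "jpol Nd n p s = exec Nd n p {} (\<lambda>_. undefined) s"

definition mixpol :: "(nat \<Rightarrow> 's \<Rightarrow> (nat \<Rightarrow> 'a) \<Rightarrow> 'a) \<Rightarrow> (nat \<Rightarrow> 's \<Rightarrow> (nat \<Rightarrow> 'a) \<Rightarrow> 'a) \<Rightarrow> nat
                   \<Rightarrow> (nat \<Rightarrow> 's \<Rightarrow> (nat \<Rightarrow> 'a) \<Rightarrow> 'a)" where
  "mixpol pold pnew i = (\<lambda>j. if j < i then pnew j else pold j)"

definition argmax_set :: "'a set \<Rightarrow> ('a \<Rightarrow> real) \<Rightarrow> 'a set" where
  "argmax_set S f = {x \<in> S. \<forall>y\<in>S. f y \<le> f x}"

text \<open>Objective maximised by agent i at iteration k:
 x |-> Q^{pi^k}(s, a_{N_d[i]}, pi^{k,i}_{-N_d[i]}(s, a_{N_d[i]})) with a_{N_d(i)} = b, a_i = x.\<close>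
definition admapi_obj :: "nat \<Rightarrow> (nat \<Rightarrow> nat set) \<Rightarrow> ('s::finite \<Rightarrow> (nat \<Rightarrow> 'a) \<Rightarrow> 's \<Rightarrow> real)
     \<Rightarrow> ('s \<Rightarrow> (nat \<Rightarrow> 'a) \<Rightarrow> real) \<Rightarrow> real \<Rightarrow> (nat \<Rightarrow> nat \<Rightarrow> 's \<Rightarrow> (nat \<Rightarrow> 'a) \<Rightarrow> 'a)
     \<Rightarrow> nat \<Rightarrow> nat \<Rightarrow> 's \<Rightarrow> (nat \<Rightarrow> 'a) \<Rightarrow> 'a \<Rightarrow> real" where
  "admapi_obj n Nd P r \<gamma> pol k i s b x =
     QV P r \<gamma> (Vpi P r \<gamma> (jpol Nd n (pol k))) s
        (exec Nd n (mixpol (pol k) (pol (Suc k)) i) (insert i (Nd i)) (b(i := x)) s)"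

definition is_admapi :: "nat \<Rightarrow> (nat \<Rightarrow> 'a set) \<Rightarrow> (nat \<Rightarrow> nat set)
     \<Rightarrow> ('s::finite \<Rightarrow> (nat \<Rightarrow> 'a) \<Rightarrow> 's \<Rightarrow> real) \<Rightarrow> ('s \<Rightarrow> (nat \<Rightarrow> 'a) \<Rightarrow> real) \<Rightarrow> real
     \<Rightarrow> (nat \<Rightarrow> nat \<Rightarrow> 's \<Rightarrow> (nat \<Rightarrow> 'a) \<Rightarrow> 'a) \<Rightarrow> bool" where
  "is_admapi n A Nd P r \<gamma> pol \<longleftrightarrow>
     (\<forall>i<n. \<forall>s. \<forall>b\<in>PiE (Nd i) A. pol 0 i s b \<in> A i) \<and>
     (\<forall>k. \<forall>i<n. \<forall>s. \<forall>b\<in>PiE (Nd i) A.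
        pol (Suc k) i s b \<in> argmax_set (A i) (admapi_obj n Nd P r \<gamma> pol k i s b))"

definition singleton_argmax :: "nat \<Rightarrow> (nat \<Rightarrow> 'a set) \<Rightarrow> (nat \<Rightarrow> nat set)
     \<Rightarrow> ('s::finite \<Rightarrow> (nat \<Rightarrow> 'a) \<Rightarrow> 's \<Rightarrow> real) \<Rightarrow> ('s \<Rightarrow> (nat \<Rightarrow> 'a) \<Rightarrow> real) \<Rightarrow> real
     \<Rightarrow> (nat \<Rightarrow> nat \<Rightarrow> 's \<Rightarrow> (nat \<Rightarrow> 'a) \<Rightarrow> 'a) \<Rightarrow> bool" where
  "singleton_argmax n A Nd P r \<gamma> pol \<longleftrightarrow>
     (\<forall>k\<ge>1. \<forall>i<n. \<forall>s. \<forall>b\<in>PiE (Nd i) A.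
        \<exists>x. argmax_set (A i) (admapi_obj n Nd P r \<gamma> pol k i s b) = {x})"

definition undirected_graph :: "nat \<Rightarrow> (nat \<times> nat) set \<Rightarrow> bool" where
  "undirected_graph n Ec \<longleftrightarrow> Ec \<subseteq> {..<n} \<times> {..<n} \<and> sym Ec \<and> irrefl Ec"

text \<open>Ec is a coordination graph of Qf: each undirected edge {i,j} counted once (i < j).\<close>
definition is_CG :: "nat \<Rightarrow> (nat \<Rightarrow> 'a set) \<Rightarrow> (nat \<times> nat) set \<Rightarrow> ('s \<Rightarrow> (nat \<Rightarrow> 'a) \<Rightarrow> real) \<Rightarrow> bool" where
  "is_CG n A Ec Qf \<longleftrightarrow> undirected_graph n Ec \<and>
     (\<exists>Q1 :: nat \<Rightarrow> 's \<Rightarrow> 'a \<Rightarrow> real. \<exists>Q2 :: nat \<Rightarrow> nat \<Rightarrow> 's \<Rightarrow> 'a \<Rightarrow> 'a \<Rightarrow> real.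
        \<forall>s. \<forall>a\<in>jactions n A.
          Qf s a = (\<Sum>i<n. Q1 i s (a i)) + (\<Sum>(i, j)\<in>{e\<in>Ec. fst e < snd e}. Q2 i j s (a i) (a j)))"

definition Nc :: "(nat \<times> nat) set \<Rightarrow> nat \<Rightarrow> nat set" where
  "Nc Ec i = {j. (i, j) \<in> Ec}"

definition NcS :: "(nat \<times> nat) set \<Rightarrow> nat set \<Rightarrow> nat set" where
  "NcS Ec S = (\<Union>i\<in>S. Nc Ec i) - S"

end

theory Submission
  imports Defs
begin

text \<open>Every agent update maximises \<open>Q^{pi^k}\<close> with the behaviour of the other agents fixed,
  so a sweep over the agents can only increase \<open>Q^{pi^k}\<close> at the current joint action, and the
  comparison principle for the Bellman operator gives \<open>V^{pi^k} \<le> V^{pi^{k+1}}\<close>. As there are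
  only finitely many deterministic policies, the values are constant, equal to the limit, from
  some \<open>K\<^sub>0\<close> on. From then on \<open>Q^{pi^k}\<close> splits along the coordination graph into terms charged
  to the agents, and \<open>N_d(i) = N_c(i^[+])\<close> makes the part of agent \<open>i\<close>'s objective that depends
  on \<open>a_i\<close> a function of the actions of \<open>N_d(i)\<close>, \<open>i\<close> and the later agents only. Backward
  induction over the agents, with the singleton argmax, shows that the policy of the last agent,
  then that of the one before, and so on, stop changing. For the limit policy the same
  decomposition supports variable elimination from the last agent backwards, which shows that
  the limit policy is greedy for its own value and hence optimal.\<close>

section \<open>Executing policies along the DAG\<close>

lemma exec_pre_beyond: "m \<le> j \<Longrightarrow> exec_pre Nd p F a s m j = undefined"
  by (induction m) (auto simp: Let_def)

lemma exec_pre_stable: "j < m \<Longrightarrow> exec_pre Nd p F a s m j = exec_pre Nd p F a s (Suc j) j"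
  by (induction m) (auto simp: Let_def less_Suc_eq)

lemma exec_beyond: "n \<le> j \<Longrightarrow> exec Nd n p F a s j = undefined"
  unfolding exec_def by (rule exec_pre_beyond)

lemma exec_unfold:
  assumes "j < n" and "Nd j \<subseteq> {..<j}"
  shows "exec Nd n p F a s j =
           (if j \<in> F then a j else p j s (restrict (exec Nd n p F a s) (Nd j)))"
proof -
  have "restrict (exec_pre Nd p F a s j) (Nd j) = restrict (exec Nd n p F a s) (Nd j)"
  proof (rule restrict_ext)
    fix l assume "l \<in> Nd j"
    then have "l < j" "l < n" using assms by auto
    then have "exec_pre Nd p F a s j l = exec_pre Nd p F a s (Suc l) l"
      and "exec_pre Nd p F a s n l = exec_pre Nd p F a s (Suc l) l"
      by (simp_all add: exec_pre_stable[of l])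
    then show "exec_pre Nd p F a s j l = exec Nd n p F a s l" by (simp add: exec_def)
  qed
  moreover have "exec Nd n p F a s j = exec_pre Nd p F a s (Suc j) j"
    unfolding exec_def using assms(1) by (rule exec_pre_stable)
  ultimately show ?thesis by (simp add: Let_def)
qed

lemma exec_ext:
  "(\<And>j. j < n \<Longrightarrow> exec Nd n p F a s j = exec Nd n p' F' a' s j) \<Longrightarrow>
     exec Nd n p F a s = exec Nd n p' F' a' s"
  by (rule ext) (metis exec_beyond not_le)

lemma exec_eqI:
  assumes dag: "\<forall>j<n. Nd j \<subseteq> {..<j}" and "j \<in> R"
    and R: "R \<subseteq> {..<n}" "\<And>j. j \<in> R - F \<Longrightarrow> Nd j \<subseteq> R"
    and fixed: "\<And>j. j \<in> R \<inter> F \<Longrightarrow> c j = a j"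
    and free: "\<And>j. j \<in> R - F \<Longrightarrow> c j = p j s (restrict c (Nd j))"
  shows "exec Nd n p F a s j = c j"
  using \<open>j \<in> R\<close>
proof (induction j rule: less_induct)
  case (less j)
  have j: "j < n" "Nd j \<subseteq> {..<j}" using less.prems R dag by auto
  show ?case
  proof (cases "j \<in> F")
    case True
    then show ?thesis using less.prems fixed exec_unfold[of j n Nd p F a s, OF j(1,2)] by simp
  next
    case False
    then have "Nd j \<subseteq> R" using R(2) less.prems by blast
    then have "restrict (exec Nd n p F a s) (Nd j) = restrict c (Nd j)"
      using j by (intro restrict_ext less.IH) auto
    then show ?thesis using less.prems False free exec_unfold[of j n Nd p F a s, OF j(1,2)] by simp
  qed
qed

lemma exec_in_jactions:
  assumes dag: "\<forall>j<n. Nd j \<subseteq> {..<j}"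
    and fixed: "\<And>j. j < n \<Longrightarrow> j \<in> F \<Longrightarrow> a j \<in> A j"
    and free: "\<And>j d. j < n \<Longrightarrow> j \<notin> F \<Longrightarrow> d \<in> PiE (Nd j) A \<Longrightarrow> p j s d \<in> A j"
  shows "exec Nd n p F a s \<in> jactions n A"
proof -
  have "exec Nd n p F a s j \<in> A j" if "j < n" for j
    using that
  proof (induction j rule: less_induct)
    case (less j)
    have j: "Nd j \<subseteq> {..<j}" using less.prems dag by auto
    then have "restrict (exec Nd n p F a s) (Nd j) \<in> PiE (Nd j) A"
      using less by auto
    then show ?case using exec_unfold[of j n Nd p F a s, OF less.prems j] less.prems fixed free by auto
  qed
  then show ?thesis
    by (auto simp: jactions_def PiE_def extensional_def exec_beyond)
qed

lemma exec_cong_free: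
  "(\<And>j. j < n \<Longrightarrow> j \<notin> F \<Longrightarrow> p j = p' j) \<Longrightarrow> exec Nd n p F a s = exec Nd n p' F a s"
  unfolding exec_def by (induction n) (auto simp: Let_def)

lemma exec_prefix_cong:
  assumes dag: "\<forall>j<n. Nd j \<subseteq> {..<j}" and "i \<le> n"
    and "\<And>j. j < i \<Longrightarrow> p j = p' j" and "\<And>j. j < i \<Longrightarrow> j \<in> F \<Longrightarrow> a j = a' j"
    and "j < i"
  shows "exec Nd n p F a s j = exec Nd n p' F a' s j"
proof (rule exec_eqI[OF dag, where R = "{..<i}"])
  fix l assume l: "l \<in> {..<i} - F"
  then have "Nd l \<subseteq> {..<l}" using dag \<open>i \<le> n\<close> by auto
  then show "Nd l \<subseteq> {..<i}" using l by auto
  show "exec Nd n p' F a' s l = p l s (restrict (exec Nd n p' F a' s) (Nd l))"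
    using l assms exec_unfold[of l n Nd p' F a' s] by auto
next
  fix l assume "l \<in> {..<i} \<inter> F"
  then show "exec Nd n p' F a' s l = a l"
    using assms exec_unfold[of l n Nd p' F a' s] by auto
qed (use assms in auto)

lemma jpol_unfold:
  "j < n \<Longrightarrow> Nd j \<subseteq> {..<j} \<Longrightarrow> jpol Nd n p s j = p j s (restrict (jpol Nd n p s) (Nd j))"
  unfolding jpol_def by (simp add: exec_unfold)

lemma exec_eq_jpol:
  assumes dag: "\<forall>j<n. Nd j \<subseteq> {..<j}" and "\<And>j. j < n \<Longrightarrow> j \<in> F \<Longrightarrow> a j = jpol Nd n p s j"
  shows "exec Nd n p F a s = jpol Nd n p s"
proof -
  have "exec Nd n p F a s j = jpol Nd n p s j" if "j < n" for j
  proof (rule exec_eqI[OF dag, where R = "{..<n}"])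
    fix l assume l: "l \<in> {..<n} - F"
    then have "Nd l \<subseteq> {..<l}" using dag by auto
    then show "Nd l \<subseteq> {..<n}" "jpol Nd n p s l = p l s (restrict (jpol Nd n p s) (Nd l))"
      using l by (auto simp: jpol_unfold)
  qed (use that assms in auto)
  then show ?thesis
    unfolding jpol_def by (intro exec_ext) (simp add: jpol_def)
qed

section \<open>Finite discounted Markov decision processes\<close>

lemma stepdist_Suc_first:
  "stepdist P \<mu> (Suc t) s s' = (\<Sum>u\<in>UNIV. P s (\<mu> s) u * stepdist P \<mu> t u s')"
proof (induction t arbitrary: s')
  case 0
  then show ?case by (simp add: of_bool_def[symmetric] sum_of_bool_mult_eq sum_mult_of_bool_eq)
next
  case (Suc t)
  have "stepdist P \<mu> (Suc (Suc t)) s s' =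
          (\<Sum>u\<in>UNIV. (\<Sum>w\<in>UNIV. P s (\<mu> s) w * stepdist P \<mu> t w u) * P u (\<mu> u) s')"
    using Suc by simp
  also have "\<dots> = (\<Sum>w\<in>UNIV. P s (\<mu> s) w * (\<Sum>u\<in>UNIV. stepdist P \<mu> t w u * P u (\<mu> u) s'))"
    by (simp add: sum_distrib_left sum_distrib_right mult.assoc) (rule sum.swap)
  finally show ?case by simp
qed

lemma QV_diff:
  "QV P r \<gamma> W s a - QV P r \<gamma> W' s a = \<gamma> * (\<Sum>s'\<in>UNIV. P s a s' * (W s' - W' s'))"
  by (simp add: QV_def right_diff_distrib sum_subtractf)

locale finite_mdp =
  fixes Act :: "(nat \<Rightarrow> 'a) set"
    and P :: "'s::finite \<Rightarrow> (nat \<Rightarrow> 'a) \<Rightarrow> 's \<Rightarrow> real"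
    and r :: "'s \<Rightarrow> (nat \<Rightarrow> 'a) \<Rightarrow> real"
    and \<gamma> :: real
  assumes P_nonneg: "a \<in> Act \<Longrightarrow> 0 \<le> P s a s'"
    and P_sum: "a \<in> Act \<Longrightarrow> (\<Sum>s'\<in>UNIV. P s a s') = 1"
    and discount: "0 \<le> \<gamma>" "\<gamma> < 1"
begin

definition policies :: "('s \<Rightarrow> (nat \<Rightarrow> 'a)) set" where
  "policies = {\<mu>. \<forall>s. \<mu> s \<in> Act}"

lemma finite_policies: "finite Act \<Longrightarrow> finite policies"
proof -
  assume "finite Act"
  moreover have "policies = PiE UNIV (\<lambda>_. Act)"
    unfolding policies_def by auto
  ultimately show ?thesis by (simp add: finite_PiE)
qed

lemma stepdist_nonneg: "\<mu> \<in> policies \<Longrightarrow> 0 \<le> stepdist P \<mu> t s s'"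
  by (induction t arbitrary: s') (auto simp: policies_def P_nonneg intro!: sum_nonneg)

lemma stepdist_sum: "\<mu> \<in> policies \<Longrightarrow> (\<Sum>s'\<in>UNIV. stepdist P \<mu> t s s') = 1"
proof (induction t)
  case (Suc t)
  have "(\<Sum>s'\<in>UNIV. stepdist P \<mu> (Suc t) s s') =
          (\<Sum>u\<in>UNIV. stepdist P \<mu> t s u * (\<Sum>s'\<in>UNIV. P u (\<mu> u) s'))"
    by (simp add: sum_distrib_left) (rule sum.swap)
  also have "\<dots> = 1"
    using Suc P_sum by (simp add: policies_def)
  finally show ?case .
qed simp

lemma stepdist_le_1: "\<mu> \<in> policies \<Longrightarrow> stepdist P \<mu> t s s' \<le> 1"
  using member_le_sum[of s' UNIV "stepdist P \<mu> t s"] stepdist_nonneg stepdist_sum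
  by (metis UNIV_I finite)

definition expected_reward :: "('s \<Rightarrow> (nat \<Rightarrow> 'a)) \<Rightarrow> nat \<Rightarrow> 's \<Rightarrow> real" where
  "expected_reward \<mu> t s = (\<Sum>u\<in>UNIV. stepdist P \<mu> t s u * r u (\<mu> u))"

lemma Vpi_eq_suminf: "Vpi P r \<gamma> \<mu> s = (\<Sum>t. \<gamma> ^ t * expected_reward \<mu> t s)"
  by (simp add: Vpi_def expected_reward_def)

lemma expected_reward_0: "expected_reward \<mu> 0 s = r s (\<mu> s)"
  by (simp add: expected_reward_def of_bool_def[symmetric] sum_of_bool_mult_eq)

lemma expected_reward_Suc:
  "expected_reward \<mu> (Suc t) s = (\<Sum>w\<in>UNIV. P s (\<mu> s) w * expected_reward \<mu> t w)"
  unfolding expected_reward_def stepdist_Suc_first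
  by (simp add: sum_distrib_left sum_distrib_right mult.assoc) (rule sum.swap)

lemma abs_expected_reward_le:
  assumes "\<mu> \<in> policies"
  shows "\<bar>expected_reward \<mu> t s\<bar> \<le> (\<Sum>u\<in>UNIV. \<bar>r u (\<mu> u)\<bar>)"
proof -
  have "\<bar>expected_reward \<mu> t s\<bar> \<le> (\<Sum>u\<in>UNIV. stepdist P \<mu> t s u * \<bar>r u (\<mu> u)\<bar>)"
    unfolding expected_reward_def
    using sum_abs[of "\<lambda>u. stepdist P \<mu> t s u * r u (\<mu> u)" UNIV]
    by (simp add: abs_mult stepdist_nonneg[OF assms])
  also have "\<dots> \<le> (\<Sum>u\<in>UNIV. \<bar>r u (\<mu> u)\<bar>)"
    using stepdist_le_1[OF assms] stepdist_nonneg[OF assms]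
    by (intro sum_mono mult_left_le_one_le) auto
  finally show ?thesis .
qed

lemma summable_discounted_reward:
  assumes "\<mu> \<in> policies"
  shows "summable (\<lambda>t. \<gamma> ^ t * expected_reward \<mu> t s)"
proof (rule summable_comparison_test)
  show "summable (\<lambda>t. (\<Sum>u\<in>UNIV. \<bar>r u (\<mu> u)\<bar>) * \<gamma> ^ t)"
    using discount by (intro summable_mult summable_geometric) auto
  show "\<exists>N. \<forall>t\<ge>N. norm (\<gamma> ^ t * expected_reward \<mu> t s) \<le> (\<Sum>u\<in>UNIV. \<bar>r u (\<mu> u)\<bar>) * \<gamma> ^ t"
    using abs_expected_reward_le[OF assms] discount
    by (auto simp: abs_mult mult.commute intro!: mult_left_mono)
qed

lemma Vpi_bellman:
  assumes "\<mu> \<in> policies"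
  shows "Vpi P r \<gamma> \<mu> s = QV P r \<gamma> (Vpi P r \<gamma> \<mu>) s (\<mu> s)"
proof -
  note summ = summable_discounted_reward[OF assms]
  have "(\<Sum>t. \<gamma> ^ t * expected_reward \<mu> t s) =
          (\<Sum>t. \<gamma> ^ Suc t * expected_reward \<mu> (Suc t) s) + r s (\<mu> s)"
    using suminf_split_head[OF summ] by (simp add: expected_reward_0)
  also have "(\<Sum>t. \<gamma> ^ Suc t * expected_reward \<mu> (Suc t) s) =
               (\<Sum>t. \<gamma> * (\<Sum>w\<in>UNIV. P s (\<mu> s) w * (\<gamma> ^ t * expected_reward \<mu> t w)))"
    by (simp add: expected_reward_Suc sum_distrib_left mult_ac)
  also have "\<dots> = \<gamma> * (\<Sum>w\<in>UNIV. \<Sum>t. P s (\<mu> s) w * (\<gamma> ^ t * expected_reward \<mu> t w))"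
    using summ by (simp add: suminf_mult suminf_sum summable_sum summable_mult)
  also have "\<dots> = \<gamma> * (\<Sum>w\<in>UNIV. P s (\<mu> s) w * Vpi P r \<gamma> \<mu> w)"
    using summ by (simp add: suminf_mult Vpi_eq_suminf)
  finally show ?thesis by (simp add: Vpi_eq_suminf QV_def)
qed

text \<open>Maximum principle: at a maximum point \<open>M \<le> \<gamma> M\<close>, and \<open>\<gamma> < 1\<close>.\<close>
lemma nonpos_if_le_discounted_mean:
  assumes "\<mu> \<in> policies" and le: "\<And>s. d s \<le> \<gamma> * (\<Sum>s'\<in>UNIV. P s (\<mu> s) s' * d s')"
  shows "d s \<le> 0"
proof -
  define M where "M = Max (range d)"
  have d_le_M: "d x \<le> M" for x
    unfolding M_def by simp
  have "M \<in> range d"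
    unfolding M_def by (intro Max_in) auto
  then obtain x where "d x = M" by auto
  have "(\<Sum>s'\<in>UNIV. P x (\<mu> x) s' * d s') \<le> (\<Sum>s'\<in>UNIV. P x (\<mu> x) s' * M)"
    using assms(1) P_nonneg d_le_M by (intro sum_mono mult_left_mono) (auto simp: policies_def)
  also have "\<dots> = M"
    using assms(1) P_sum by (simp add: policies_def flip: sum_distrib_right)
  finally have "M \<le> \<gamma> * M"
    using le[of x] \<open>d x = M\<close> discount by (metis mult_left_mono order_trans)
  then have "M \<le> 0"
    using discount by (metis mult_le_cancel_right1 not_le)
  then show ?thesis using d_le_M[of s] by simp
qed

lemma le_Vpi_if_le_QV:
  assumes "\<mu> \<in> policies" and "\<And>s. W s \<le> QV P r \<gamma> W s (\<mu> s)"
  shows "W s \<le> Vpi P r \<gamma> \<mu> s"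
proof -
  have "W s - Vpi P r \<gamma> \<mu> s \<le> 0"
  proof (rule nonpos_if_le_discounted_mean[OF assms(1)])
    fix s
    show "W s - Vpi P r \<gamma> \<mu> s \<le> \<gamma> * (\<Sum>s'\<in>UNIV. P s (\<mu> s) s' * (W s' - Vpi P r \<gamma> \<mu> s'))"
      using assms(2)[of s] Vpi_bellman[OF assms(1), of s] QV_diff[of P r \<gamma> W s "\<mu> s" "Vpi P r \<gamma> \<mu>"]
      by linarith
  qed
  then show ?thesis by simp
qed

lemma Vpi_le_if_QV_le:
  assumes "\<mu> \<in> policies" and "\<And>s. QV P r \<gamma> W s (\<mu> s) \<le> W s"
  shows "Vpi P r \<gamma> \<mu> s \<le> W s"
proof -
  have "Vpi P r \<gamma> \<mu> s - W s \<le> 0"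
  proof (rule nonpos_if_le_discounted_mean[OF assms(1)])
    fix s
    show "Vpi P r \<gamma> \<mu> s - W s \<le> \<gamma> * (\<Sum>s'\<in>UNIV. P s (\<mu> s) s' * (Vpi P r \<gamma> \<mu> s' - W s'))"
      using assms(2)[of s] Vpi_bellman[OF assms(1), of s] QV_diff[of P r \<gamma> "Vpi P r \<gamma> \<mu>" s "\<mu> s" W]
      by linarith
  qed
  then show ?thesis by simp
qed

lemma Vpi_eq_SUP_if_greedy:
  assumes "\<mu> \<in> policies" and greedy: "\<And>s a. a \<in> Act \<Longrightarrow> QV P r \<gamma> (Vpi P r \<gamma> \<mu>) s a \<le> Vpi P r \<gamma> \<mu> s"
  shows "Vpi P r \<gamma> \<mu> s = (SUP \<nu>\<in>policies. Vpi P r \<gamma> \<nu> s)"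
proof (rule cSup_eq_maximum[symmetric])
  show "Vpi P r \<gamma> \<mu> s \<in> (\<lambda>\<nu>. Vpi P r \<gamma> \<nu> s) ` policies"
    using assms(1) by simp
  show "x \<le> Vpi P r \<gamma> \<mu> s" if "x \<in> (\<lambda>\<nu>. Vpi P r \<gamma> \<nu> s) ` policies" for x
    using that greedy by (auto simp: policies_def intro: Vpi_le_if_QV_le)
qed

end

section \<open>Policy improvement\<close>

locale admapi = finite_mdp "jactions n A" P r \<gamma>
  for n :: nat and A :: "nat \<Rightarrow> 'a set" and P :: "'s::finite \<Rightarrow> (nat \<Rightarrow> 'a) \<Rightarrow> 's \<Rightarrow> real"
    and r \<gamma> +
  fixes Nd :: "nat \<Rightarrow> nat set" and pol :: "nat \<Rightarrow> nat \<Rightarrow> 's \<Rightarrow> (nat \<Rightarrow> 'a) \<Rightarrow> 'a"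
  assumes A_finite: "i < n \<Longrightarrow> finite (A i)"
    and dag: "\<forall>i<n. Nd i \<subseteq> {..<i}"
    and iteration: "is_admapi n A Nd P r \<gamma> pol"
begin

abbreviation V :: "nat \<Rightarrow> 's \<Rightarrow> real" where
  "V k \<equiv> Vpi P r \<gamma> (jpol Nd n (pol k))"

lemma parent_less: "j < n \<Longrightarrow> l \<in> Nd j \<Longrightarrow> l < j"
  using dag by auto

lemma parent_less_n: "j < n \<Longrightarrow> l \<in> Nd j \<Longrightarrow> l < n"
  using parent_less by (meson less_trans)

lemma exec_apply:
  "j < n \<Longrightarrow> exec Nd n p F a s j = (if j \<in> F then a j else p j s (restrict (exec Nd n p F a s) (Nd j)))"
  using dag by (simp add: exec_unfold)

definition completion :: "nat \<Rightarrow> nat \<Rightarrow> 's \<Rightarrow> (nat \<Rightarrow> 'a) \<Rightarrow> 'a \<Rightarrow> nat \<Rightarrow> 'a" where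
  "completion k i s b x =
     exec Nd n (mixpol (pol k) (pol (Suc k)) i) (insert i (Nd i)) (b(i := x)) s"

lemma admapi_obj_eq: "admapi_obj n Nd P r \<gamma> pol k i s b x = QV P r \<gamma> (V k) s (completion k i s b x)"
  by (simp add: admapi_obj_def completion_def)

lemma pol_in_A: "i < n \<Longrightarrow> b \<in> PiE (Nd i) A \<Longrightarrow> pol k i s b \<in> A i"
  using iteration by (cases k) (auto simp: is_admapi_def argmax_set_def)

lemma pol_Suc_in_argmax:
  "i < n \<Longrightarrow> b \<in> PiE (Nd i) A \<Longrightarrow>
     pol (Suc k) i s b \<in> argmax_set (A i) (admapi_obj n Nd P r \<gamma> pol k i s b)"
  using iteration by (auto simp: is_admapi_def)

lemma restrict_in_PiE: "a \<in> jactions n A \<Longrightarrow> i < n \<Longrightarrow> restrict a (Nd i) \<in> PiE (Nd i) A"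
  using dag by (fastforce simp: jactions_def)

lemma mixpol_in_jactions: "exec Nd n (mixpol (pol k) (pol k') i) F a s \<in> jactions n A"
  if "\<And>j. j < n \<Longrightarrow> j \<in> F \<Longrightarrow> a j \<in> A j"
  using that pol_in_A by (intro exec_in_jactions[OF dag]) (auto simp: mixpol_def)

lemma exec_pol_in_jactions:
  "(\<And>j. j < n \<Longrightarrow> j \<in> F \<Longrightarrow> a j \<in> A j) \<Longrightarrow> exec Nd n (pol k) F a s \<in> jactions n A"
  using mixpol_in_jactions[of F a k k 0] by (simp add: mixpol_def)

lemma jpol_pol_in_policies: "jpol Nd n (pol k) \<in> policies"
  unfolding policies_def jpol_def by (auto intro: exec_pol_in_jactions)

lemma completion_in_jactions:
  "i < n \<Longrightarrow> b \<in> PiE (Nd i) A \<Longrightarrow> x \<in> A i \<Longrightarrow> completion k i s b x \<in> jactions n A"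
  unfolding completion_def by (rule mixpol_in_jactions) auto

lemma completion_pol_eq:
  assumes "i < n" and b: "b = restrict (jpol Nd n (mixpol (pol k) (pol (Suc k)) i) s) (Nd i)"
  shows "completion k i s b (pol k i s b) = jpol Nd n (mixpol (pol k) (pol (Suc k)) i) s"
  unfolding completion_def
proof (rule exec_eq_jpol[OF dag])
  have "jpol Nd n (mixpol (pol k) (pol (Suc k)) i) s i =
          mixpol (pol k) (pol (Suc k)) i i s (restrict (jpol Nd n (mixpol (pol k) (pol (Suc k)) i) s) (Nd i))"
    using assms(1) dag by (intro jpol_unfold) auto
  then have "jpol Nd n (mixpol (pol k) (pol (Suc k)) i) s i = pol k i s b"
    using b by (simp add: mixpol_def)
  then show "(b(i := pol k i s b)) j = jpol Nd n (mixpol (pol k) (pol (Suc k)) i) s j"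
    if "j \<in> insert i (Nd i)" for j
    using that b by auto
qed

lemma completion_pol_Suc_eq:
  assumes "i < n" and b: "b = restrict (jpol Nd n (mixpol (pol k) (pol (Suc k)) i) s) (Nd i)"
  shows "completion k i s b (pol (Suc k) i s b) = jpol Nd n (mixpol (pol k) (pol (Suc k)) (Suc i)) s"
proof -
  let ?\<mu> = "jpol Nd n (mixpol (pol k) (pol (Suc k)) (Suc i)) s"
  have "jpol Nd n (mixpol (pol k) (pol (Suc k)) i) s j = ?\<mu> j" if "j < i" for j
    unfolding jpol_def using assms(1) that
    by (intro exec_prefix_cong[OF dag, of i]) (auto simp: mixpol_def)
  then have b': "b = restrict ?\<mu> (Nd i)"
    unfolding b using assms(1) by (intro restrict_ext) (auto dest: parent_less)
  have "?\<mu> i = mixpol (pol k) (pol (Suc k)) (Suc i) i s (restrict ?\<mu> (Nd i))"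
    using assms(1) dag by (intro jpol_unfold) auto
  then have "?\<mu> i = pol (Suc k) i s b"
    using b' by (simp add: mixpol_def)
  then have fixed: "(b(i := pol (Suc k) i s b)) j = ?\<mu> j" if "j \<in> insert i (Nd i)" for j
    using that b' by auto
  have "completion k i s b (pol (Suc k) i s b) =
          exec Nd n (mixpol (pol k) (pol (Suc k)) (Suc i)) (insert i (Nd i)) (b(i := pol (Suc k) i s b)) s"
    unfolding completion_def by (rule exec_cong_free) (auto simp: mixpol_def)
  also have "\<dots> = ?\<mu>"
    using fixed by (intro exec_eq_jpol[OF dag]) auto
  finally show ?thesis .
qed

lemma QV_mixpol_le_Suc:
  assumes "i < n"
  shows "QV P r \<gamma> (V k) s (jpol Nd n (mixpol (pol k) (pol (Suc k)) i) s)
           \<le> QV P r \<gamma> (V k) s (jpol Nd n (mixpol (pol k) (pol (Suc k)) (Suc i)) s)"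
proof -
  define b where "b = restrict (jpol Nd n (mixpol (pol k) (pol (Suc k)) i) s) (Nd i)"
  have b_in: "b \<in> PiE (Nd i) A"
    unfolding b_def jpol_def using assms by (intro restrict_in_PiE mixpol_in_jactions) auto
  have "admapi_obj n Nd P r \<gamma> pol k i s b (pol k i s b)
          \<le> admapi_obj n Nd P r \<gamma> pol k i s b (pol (Suc k) i s b)"
    using pol_Suc_in_argmax[OF assms b_in] pol_in_A[OF assms b_in] by (auto simp: argmax_set_def)
  then show ?thesis
    using completion_pol_eq[OF assms b_def] completion_pol_Suc_eq[OF assms b_def]
    by (simp add: admapi_obj_eq)
qed

lemma policy_improvement: "V k s \<le> V (Suc k) s"
proof -
  let ?\<mu> = "\<lambda>i. jpol Nd n (mixpol (pol k) (pol (Suc k)) i)"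
  have sweep: "QV P r \<gamma> (V k) s (?\<mu> 0 s) \<le> QV P r \<gamma> (V k) s (?\<mu> m s)" if "m \<le> n" for m s
    using that
  proof (induction m)
    case (Suc m)
    then show ?case using QV_mixpol_le_Suc[of m k s] by simp
  qed simp
  have "?\<mu> 0 = jpol Nd n (pol k)"
    by (simp add: mixpol_def)
  moreover have "?\<mu> n = jpol Nd n (pol (Suc k))"
    unfolding jpol_def by (intro ext exec_cong_free) (simp add: mixpol_def)
  ultimately have "V k s' \<le> QV P r \<gamma> (V k) s' (jpol Nd n (pol (Suc k)) s')" for s'
    using sweep[of n s'] Vpi_bellman[OF jpol_pol_in_policies, of k s'] by simp
  then show ?thesis
    by (rule le_Vpi_if_le_QV[OF jpol_pol_in_policies])
qed

lemma V_eventually_const: "\<exists>K. \<forall>k\<ge>K. V k = V K"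
proof -
  have "finite (jactions n A)"
    unfolding jactions_def using A_finite by (intro finite_PiE) auto
  then have "finite ((\<lambda>\<mu>. Vpi P r \<gamma> \<mu>) ` policies)"
    by (intro finite_imageI finite_policies)
  moreover have "range V \<subseteq> (\<lambda>\<mu>. Vpi P r \<gamma> \<mu>) ` policies"
    using jpol_pol_in_policies by auto
  ultimately have "finite (range V)"
    by (rule finite_subset[rotated])
  from finite_has_maximal[OF this] obtain K where max: "\<forall>v\<in>range V. V K \<le> v \<longrightarrow> V K = v"
    by auto
  have "incseq V"
    using policy_improvement by (intro incseq_SucI le_funI)
  show ?thesis
  proof (intro exI allI impI)
    fix k assume "K \<le> k"
    with \<open>incseq V\<close> have "V K \<le> V k"
      by (rule incseqD)
    then show "V k = V K"
      using max by (metis rangeI)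
  qed
qed

lemma lim_V_eq:
  assumes "\<And>k. K \<le> k \<Longrightarrow> V k = V K"
  shows "(\<lambda>s. lim (\<lambda>k. V k s)) = V K"
proof
  fix s
  have "\<forall>\<^sub>F k in sequentially. V k s = V K s"
    by (rule eventually_sequentiallyI[of K]) (metis assms)
  then have "(\<lambda>k. V k s) \<longlonglongrightarrow> V K s"
    by (rule tendsto_eventually)
  then show "lim (\<lambda>k. V k s) = V K s"
    by (rule limI)
qed

end

section \<open>Splitting a coordination graph decomposition along the agent order\<close>

locale coordination_graph =
  fixes n :: nat and Ec :: "(nat \<times> nat) set"
    and Q1 :: "nat \<Rightarrow> 's \<Rightarrow> 'a \<Rightarrow> real" and Q2 :: "nat \<Rightarrow> nat \<Rightarrow> 's \<Rightarrow> 'a \<Rightarrow> 'a \<Rightarrow> real"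
  assumes graph: "undirected_graph n Ec"
begin

text \<open>Each edge term is charged to its larger endpoint, so that \<open>head s i\<close> only involves
  the agents before \<open>i\<close>.\<close>
definition local_term :: "'s \<Rightarrow> nat \<Rightarrow> (nat \<Rightarrow> 'a) \<Rightarrow> real" where
  "local_term s j a =
     Q1 j s (a j) + (\<Sum>(l, m)\<in>{e\<in>Ec. fst e < snd e \<and> snd e = j}. Q2 l m s (a l) (a m))"

definition head :: "'s \<Rightarrow> nat \<Rightarrow> (nat \<Rightarrow> 'a) \<Rightarrow> real" where
  "head s i a = (\<Sum>j<i. local_term s j a)"

definition tail :: "'s \<Rightarrow> nat \<Rightarrow> (nat \<Rightarrow> 'a) \<Rightarrow> real" where
  "tail s i a = (\<Sum>j\<in>{i..<n}. local_term s j a)"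

lemma sum_local_term:
  "(\<Sum>j<n. local_term s j a) =
     (\<Sum>i<n. Q1 i s (a i)) + (\<Sum>(i, j)\<in>{e\<in>Ec. fst e < snd e}. Q2 i j s (a i) (a j))"
proof -
  let ?E = "{e\<in>Ec. fst e < snd e}"
  have "Ec \<subseteq> {..<n} \<times> {..<n}"
    using graph by (simp add: undirected_graph_def)
  then have "finite ?E" "snd ` ?E \<subseteq> {..<n}"
    by (auto intro: finite_subset)
  then have "(\<Sum>j<n. \<Sum>(l, m)\<in>{e\<in>?E. snd e = j}. Q2 l m s (a l) (a m)) =
               (\<Sum>(i, j)\<in>?E. Q2 i j s (a i) (a j))"
    by (intro sum.group) auto
  then show ?thesis
    by (simp add: local_term_def sum.distrib conj_assoc)
qed

lemma head_plus_tail: "i \<le> n \<Longrightarrow> head s i a + tail s i a = (\<Sum>j<n. local_term s j a)"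
  by (simp add: head_def tail_def atLeast0LessThan[symmetric] sum.atLeastLessThan_concat)

lemma tail_Suc: "i < n \<Longrightarrow> tail s i a = local_term s i a + tail s (Suc i) a"
  by (simp add: tail_def sum.atLeast_Suc_lessThan)

lemma local_term_cong:
  assumes "\<And>l. l = j \<or> (l \<in> Nc Ec j \<and> l < j) \<Longrightarrow> a l = a' l"
  shows "local_term s j a = local_term s j a'"
proof -
  have "(l, j) \<in> Ec \<Longrightarrow> l \<in> Nc Ec j" for l
    using graph by (auto simp: undirected_graph_def Nc_def dest: symD)
  then show ?thesis
    unfolding local_term_def using assms by (auto intro!: sum.cong)
qed

lemma head_cong: "(\<And>j. j < i \<Longrightarrow> a j = a' j) \<Longrightarrow> head s i a = head s i a'"
  unfolding head_def by (intro sum.cong refl local_term_cong) auto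

lemma tail_cong:
  "(\<And>j. j \<in> {i..<n} \<union> NcS Ec {i..<n} \<Longrightarrow> a j = a' j) \<Longrightarrow> tail s i a = tail s i a'"
  unfolding tail_def NcS_def
  by (intro sum.cong refl local_term_cong)
     (metis Diff_iff UN_I Un_iff atLeastLessThan_iff less_le_trans not_le)

end

section \<open>Convergence to an optimal policy\<close>

lemma argmax_set_add_const:
  "(\<And>x. x \<in> S \<Longrightarrow> f x = c + g x) \<Longrightarrow> argmax_set S f = argmax_set S g"
  unfolding argmax_set_def by auto

locale admapi_converged =
  admapi n A P r \<gamma> Nd pol + coordination_graph n Ec Q1 Q2
  for n :: nat and A :: "nat \<Rightarrow> 'a set" and P :: "'s::finite \<Rightarrow> (nat \<Rightarrow> 'a) \<Rightarrow> 's \<Rightarrow> real"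
    and r \<gamma> Nd pol Ec and Q1 :: "nat \<Rightarrow> 's \<Rightarrow> 'a \<Rightarrow> real" and Q2 +
  fixes K0 :: nat
  assumes singleton: "singleton_argmax n A Nd P r \<gamma> pol"
    and Nd_eq: "i < n \<Longrightarrow> Nd i = NcS Ec {i..<n}"
    and K0_pos: "0 < K0"
    and V_const: "K0 \<le> k \<Longrightarrow> Vpi P r \<gamma> (jpol Nd n (pol k)) = Vpi P r \<gamma> (jpol Nd n (pol K0))"
    and QV_K0_eq: "a \<in> jactions n A \<Longrightarrow> QV P r \<gamma> (Vpi P r \<gamma> (jpol Nd n (pol K0))) s a =
          (\<Sum>i<n. Q1 i s (a i)) + (\<Sum>(i, j)\<in>{e\<in>Ec. fst e < snd e}. Q2 i j s (a i) (a j))"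
begin

lemma QV_eq_head_plus_tail:
  assumes "K0 \<le> k" "a \<in> jactions n A" "i \<le> n"
  shows "QV P r \<gamma> (V k) s a = head s i a + tail s i a"
  using V_const[OF assms(1)] QV_K0_eq[OF assms(2)] head_plus_tail[OF assms(3)]
  by (simp add: sum_local_term)

lemma Nd_subset: "i < j \<Longrightarrow> j < n \<Longrightarrow> Nd j \<subseteq> Nd i \<union> {i..<n}"
  using graph unfolding undirected_graph_def by (fastforce simp: Nd_eq NcS_def Nc_def)

lemma head_completion_indep:
  "i < n \<Longrightarrow> head s i (completion k i s b x) = head s i (completion k i s b x')"
  unfolding completion_def by (intro head_cong exec_prefix_cong[OF dag, of i]) auto

text \<open>Agents before \<open>i\<close> act before \<open>a\<^sub>i\<close> is chosen, so only the tail term sees the choice.\<close>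
lemma argmax_admapi_obj_eq:
  assumes "K0 \<le> k" "i < n" "b \<in> PiE (Nd i) A"
  shows "argmax_set (A i) (admapi_obj n Nd P r \<gamma> pol k i s b) =
           argmax_set (A i) (\<lambda>x. tail s i (completion k i s b x))"
proof (rule argmax_set_add_const)
  fix x assume "x \<in> A i"
  then have "admapi_obj n Nd P r \<gamma> pol k i s b x =
               head s i (completion k i s b x) + tail s i (completion k i s b x)"
    using assms by (simp add: admapi_obj_eq QV_eq_head_plus_tail completion_in_jactions)
  then show "admapi_obj n Nd P r \<gamma> pol k i s b x =
               head s i (completion k i s b undefined) + tail s i (completion k i s b x)"
    using head_completion_indep[OF assms(2), where x' = undefined] by simp
qed

lemma tail_completion_eq_tail_exec:
  assumes "i < n" and q_in: "exec Nd n q F a s \<in> jactions n A"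
    and later_free: "\<And>j. i < j \<Longrightarrow> j < n \<Longrightarrow> j \<notin> F"
    and later_pol: "\<And>j d. i < j \<Longrightarrow> j < n \<Longrightarrow> d \<in> PiE (Nd j) A \<Longrightarrow> q j s d = pol k j s d"
    and fixed: "\<And>j. j \<in> insert i (Nd i) \<Longrightarrow> exec Nd n q F a s j = (b(i := x)) j"
  shows "tail s i (completion k i s b x) = tail s i (exec Nd n q F a s)"
proof (rule tail_cong)
  let ?c = "exec Nd n q F a s"
  fix j assume "j \<in> {i..<n} \<union> NcS Ec {i..<n}"
  then have "j \<in> Nd i \<union> {i..<n}"
    using Nd_eq assms(1) by auto
  then show "completion k i s b x j = ?c j"
    unfolding completion_def
  proof (rule exec_eqI[OF dag])
    show "Nd i \<union> {i..<n} \<subseteq> {..<n}"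
      using parent_less_n[OF assms(1)] assms(1) by auto
    fix l assume l: "l \<in> Nd i \<union> {i..<n} - insert i (Nd i)"
    then have "i < l" "l < n"
      by auto
    then show "Nd l \<subseteq> Nd i \<union> {i..<n}"
      by (rule Nd_subset)
    show "?c l = mixpol (pol k) (pol (Suc k)) i l s (restrict ?c (Nd l))"
      using l dag later_free later_pol restrict_in_PiE[OF q_in]
      by (auto simp: exec_unfold mixpol_def)
  qed (use fixed in auto)
qed

lemma pol_Suc_eq:
  assumes "K0 \<le> k" "K0 \<le> k'" "i < n" and d: "d \<in> PiE (Nd i) A"
    and later: "\<And>j d. i < j \<Longrightarrow> j < n \<Longrightarrow> d \<in> PiE (Nd j) A \<Longrightarrow> pol k j s d = pol k' j s d"
  shows "pol (Suc k) i s d = pol (Suc k') i s d"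
proof -
  have "tail s i (completion k i s d x) = tail s i (completion k' i s d x)" if "x \<in> A i" for x
    unfolding completion_def[of k']
  proof (rule tail_completion_eq_tail_exec)
    show "exec Nd n (mixpol (pol k') (pol (Suc k')) i) (insert i (Nd i)) (d(i := x)) s \<in> jactions n A"
      using completion_in_jactions[OF assms(3) d that] by (simp add: completion_def)
    show "j \<notin> insert i (Nd i)" if "i < j" for j
      using that by (auto dest: parent_less[OF assms(3)])
    show "mixpol (pol k') (pol (Suc k')) i j s d' = pol k j s d'"
      if "i < j" "j < n" "d' \<in> PiE (Nd j) A" for j d'
      using later[OF that] that(1) by (simp add: mixpol_def)
    show "exec Nd n (mixpol (pol k') (pol (Suc k')) i) (insert i (Nd i)) (d(i := x)) s j = (d(i := x)) j"
      if "j \<in> insert i (Nd i)" for j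
    proof -
      have "j < n"
        using that assms(3) parent_less_n[OF assms(3)] by auto
      then show ?thesis
        using that by (simp add: exec_apply)
    qed
  qed (rule assms(3))
  then have "argmax_set (A i) (admapi_obj n Nd P r \<gamma> pol k i s d) =
               argmax_set (A i) (admapi_obj n Nd P r \<gamma> pol k' i s d)"
    unfolding argmax_admapi_obj_eq[OF assms(1,3) d] argmax_admapi_obj_eq[OF assms(2,3) d]
    by (intro argmax_set_add_const[where c = 0]) simp
  moreover obtain y where "argmax_set (A i) (admapi_obj n Nd P r \<gamma> pol k i s d) = {y}"
    using singleton assms K0_pos by (fastforce simp: singleton_argmax_def)
  ultimately show ?thesis
    using pol_Suc_in_argmax[OF assms(3) d, of k s] pol_Suc_in_argmax[OF assms(3) d, of k' s]
    by (metis singletonD)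
qed

text \<open>Backward induction over the agents: once the agents after \<open>i\<close> have settled, the
  objective of agent \<open>i\<close> stops changing, and the singleton argmax settles \<open>\<pi>\<^sub>i\<close> one
  iteration later.\<close>
lemma pol_stable:
  "i < n \<Longrightarrow> K0 + (n - i) \<le> k \<Longrightarrow> K0 + (n - i) \<le> k' \<Longrightarrow> d \<in> PiE (Nd i) A \<Longrightarrow>
     pol k i s d = pol k' i s d"
proof (induction "n - i" arbitrary: i k k' d rule: less_induct)
  case less
  then obtain m m' where "k = Suc m" "k' = Suc m'" "K0 + (n - Suc i) \<le> m" "K0 + (n - Suc i) \<le> m'"
    by (metis Suc_diff_Suc add_Suc_right Suc_le_D Suc_le_mono)
  moreover have "pol m j s d' = pol m' j s d'"
    if "i < j" "j < n" "d' \<in> PiE (Nd j) A" for j d'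
    using that calculation by (intro less.hyps) auto
  ultimately have "pol (Suc m) i s d = pol (Suc m') i s d"
    using less.prems by (intro pol_Suc_eq) auto
  then show ?case
    using \<open>k = Suc m\<close> \<open>k' = Suc m'\<close> by simp
qed

text \<open>Variable elimination along the coordination graph, from the last agent backwards.\<close>
lemma tail_le_tail_exec:
  assumes "K0 \<le> K"
    and fixpoint: "\<And>j d. j < n \<Longrightarrow> d \<in> PiE (Nd j) A \<Longrightarrow> pol (Suc K) j s d = pol K j s d"
    and "i \<le> n" "a \<in> jactions n A"
  shows "tail s i a \<le> tail s i (exec Nd n (pol K) {..<i} a s)"
  using \<open>i \<le> n\<close>
proof (induction "n - i" arbitrary: i)
  case 0
  then have "i = n" by simp
  then show ?case by (simp add: tail_def)
next
  case (Suc m)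
  then have i: "i < n" by simp
  have a_in: "\<And>j. j < n \<Longrightarrow> a j \<in> A j"
    using \<open>a \<in> jactions n A\<close> by (auto simp: jactions_def)
  define b where "b = restrict a (Nd i)"
  let ?g = "exec Nd n (pol K) {..<Suc i} a s"
  let ?e = "exec Nd n (pol K) {..<i} a s"
  have b_in: "b \<in> PiE (Nd i) A"
    unfolding b_def using assms(4) i by (rule restrict_in_PiE)
  have g_eq: "?g j = a j" if "j \<le> i" for j
    using that i by (simp add: exec_apply)
  have e_eq: "?e j = a j" if "j < i" for j
    using that i by (simp add: exec_apply)
  have "restrict ?e (Nd i) = b"
    unfolding b_def by (intro restrict_ext e_eq) (rule parent_less[OF i])
  then have "?e i = pol K i s b"
    using i by (simp add: exec_apply)
  then have e_i: "?e i = pol (Suc K) i s b"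
    using fixpoint i b_in by simp
  have "tail s i a = local_term s i a + tail s (Suc i) a"
    using i by (rule tail_Suc)
  also have "\<dots> \<le> local_term s i a + tail s (Suc i) ?g"
    using Suc i by simp
  also have "\<dots> = local_term s i ?g + tail s (Suc i) ?g"
    using g_eq by (intro arg_cong2[where f = "(+)"] local_term_cong refl) auto
  also have "\<dots> = tail s i ?g"
    using i by (rule tail_Suc[symmetric])
  also have "\<dots> = tail s i (completion K i s b (a i))"
  proof (rule tail_completion_eq_tail_exec[OF i, symmetric])
    show "?g \<in> jactions n A"
      using a_in by (rule exec_pol_in_jactions)
    show "?g j = (b(i := a i)) j" if "j \<in> insert i (Nd i)" for j
    proof -
      have "j \<le> i"
        using that parent_less[OF i] by (auto simp: less_imp_le)
      then show ?thesis
        using that g_eq by (auto simp: b_def)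
    qed
  qed auto
  also have "\<dots> \<le> tail s i (completion K i s b (pol (Suc K) i s b))"
  proof -
    have "pol (Suc K) i s b \<in> argmax_set (A i) (\<lambda>x. tail s i (completion K i s b x))"
      using pol_Suc_in_argmax[OF i b_in, of K s] argmax_admapi_obj_eq[OF assms(1) i b_in, of s]
      by simp
    then show ?thesis
      using a_in[OF i] by (simp add: argmax_set_def)
  qed
  also have "\<dots> = tail s i ?e"
  proof (rule tail_completion_eq_tail_exec[OF i])
    show "?e \<in> jactions n A"
      using a_in by (rule exec_pol_in_jactions)
    show "?e j = (b(i := pol (Suc K) i s b)) j" if "j \<in> insert i (Nd i)" for j
      using that e_i e_eq parent_less[OF i] by (auto simp: b_def)
  qed auto
  finally show ?case .
qed

lemma QV_le_QV_jpol:
  assumes "K0 \<le> K"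
    and fixpoint: "\<And>j d. j < n \<Longrightarrow> d \<in> PiE (Nd j) A \<Longrightarrow> pol (Suc K) j s d = pol K j s d"
    and "a \<in> jactions n A"
  shows "QV P r \<gamma> (V K) s a \<le> QV P r \<gamma> (V K) s (jpol Nd n (pol K) s)"
proof -
  have "exec Nd n (pol K) {..<0} a s = jpol Nd n (pol K) s"
    by (rule exec_eq_jpol[OF dag]) simp
  moreover have "jpol Nd n (pol K) s \<in> jactions n A"
    using jpol_pol_in_policies by (simp add: policies_def)
  ultimately show ?thesis
    using tail_le_tail_exec[OF assms(1,2) _ assms(3), of 0] assms
    by (simp add: QV_eq_head_plus_tail[where i = 0] head_def)
qed

lemma eventually_stable_and_optimal:
  "\<exists>K. (\<forall>k\<ge>K. \<forall>i<n. \<forall>s. \<forall>b\<in>PiE (Nd i) A. pol k i s b = pol K i s b)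
       \<and> (\<forall>s. V K s = Vstar n A P r \<gamma> s)"
proof (intro exI conjI allI impI ballI)
  let ?K = "K0 + n"
  show "pol k i s b = pol ?K i s b" if "?K \<le> k" "i < n" "b \<in> PiE (Nd i) A" for k i s b
    using that by (intro pol_stable) auto
  fix s
  have "V ?K s = (SUP \<mu>\<in>policies. Vpi P r \<gamma> \<mu> s)"
  proof (rule Vpi_eq_SUP_if_greedy[OF jpol_pol_in_policies])
    fix s a assume "a \<in> jactions n A"
    then have "QV P r \<gamma> (V ?K) s a \<le> QV P r \<gamma> (V ?K) s (jpol Nd n (pol ?K) s)"
      by (intro QV_le_QV_jpol) (auto intro: pol_stable)
    then show "QV P r \<gamma> (V ?K) s a \<le> V ?K s"
      using Vpi_bellman[OF jpol_pol_in_policies] by simp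
  qed
  then show "V ?K s = Vstar n A P r \<gamma> s"
    by (simp add: Vstar_def policies_def)
qed

end

theorem mainTheorem3:
  fixes n :: nat
    and A :: "nat \<Rightarrow> 'a set"
    and P :: "'s::finite \<Rightarrow> (nat \<Rightarrow> 'a) \<Rightarrow> 's \<Rightarrow> real"
    and r :: "'s \<Rightarrow> (nat \<Rightarrow> 'a) \<Rightarrow> real"
    and \<gamma> :: real
    and Nd :: "nat \<Rightarrow> nat set"
    and Ec :: "(nat \<times> nat) set"
    and pol :: "nat \<Rightarrow> nat \<Rightarrow> 's \<Rightarrow> (nat \<Rightarrow> 'a) \<Rightarrow> 'a"
  assumes A_fin: "\<forall>i<n. finite (A i) \<and> A i \<noteq> {}"
    and P_nonneg: "\<forall>s. \<forall>a\<in>jactions n A. \<forall>s'. P s a s' \<ge> 0"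
    and P_sum: "\<forall>s. \<forall>a\<in>jactions n A. (\<Sum>s'\<in>UNIV. P s a s') = 1"
    and gamma: "0 \<le> \<gamma>" "\<gamma> < 1"
    and DAG: "\<forall>i<n. Nd i \<subseteq> {..<i}"
    and alg: "is_admapi n A Nd P r \<gamma> pol"
    and single: "singleton_argmax n A Nd P r \<gamma> pol"
    and CG: "is_CG n A Ec
               (QV P r \<gamma> (\<lambda>s. lim (\<lambda>k. Vpi P r \<gamma> (jpol Nd n (pol k)) s)))"
    and nbr: "\<forall>i<n. Nd i = NcS Ec {i..<n}"
  shows "\<exists>K. (\<forall>k\<ge>K. \<forall>i<n. \<forall>s. \<forall>b\<in>PiE (Nd i) A. pol k i s b = pol K i s b)
             \<and> (\<forall>s. Vpi P r \<gamma> (jpol Nd n (pol K)) s = Vstar n A P r \<gamma> s)"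
proof -
  interpret admapi n A P r \<gamma> Nd pol
    using assms by unfold_locales (auto simp: jactions_def)
  obtain K where K: "\<forall>k\<ge>K. V k = V K"
    using V_eventually_const by blast
  \<comment> \<open>\<open>Suc K\<close>, because the singleton argmax assumption only starts at iteration 1\<close>
  then have K_Suc: "\<And>k. Suc K \<le> k \<Longrightarrow> V k = V (Suc K)"
    by (metis Suc_leD le_refl)
  have "(\<lambda>s. lim (\<lambda>k. V k s)) = V (Suc K)"
    using K_Suc by (rule lim_V_eq)
  with CG have "is_CG n A Ec (QV P r \<gamma> (V (Suc K)))"
    by simp
  then obtain Q1 Q2 where "coordination_graph n Ec"
    and "\<forall>s. \<forall>a\<in>jactions n A. QV P r \<gamma> (V (Suc K)) s a =
           (\<Sum>i<n. Q1 i s (a i)) + (\<Sum>(i, j)\<in>{e\<in>Ec. fst e < snd e}. Q2 i j s (a i) (a j))"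
    unfolding is_CG_def coordination_graph_def by blast
  then interpret admapi_converged n A P r \<gamma> Nd pol Ec Q1 Q2 "Suc K"
  proof unfold_locales
    show "V k = V (Suc K)" if "Suc K \<le> k" for k
      using that by (rule K_Suc)
  qed (use single nbr in \<open>auto simp: coordination_graph_def\<close>)
  show ?thesis
    by (rule eventually_stable_and_optimal)
qed

end
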